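(* Let $A=\mathbb Q[x_1,x_2,\dots]$ with $\deg x_n=n$, let $d$ be the derivation of $A$ with $d x_n=x_{n-1}$ for $n\ge2$ and $d x_1=0$, and let $J=\ker d=\bigoplus_n J_n$ with the induced grading. Then the Poincaré series $J(t)=\sum_{n\ge0}(\dim J_n)t^n$ is $$J(t)=\frac{1}{(1-t^2)(1-t^3)(1-t^4)\cdots}+t .$$ *)

theory Defs
  imports "HOL-Library.Multiset" "HOL-Library.Function_Algebras" "HOL-Computational_Algebra.Formal_Power_Series"
begin

text \<open>A monomial x_{a_1}...x_{a_k} is encoded by the
multiset {a_1,...,a_k} of positive integers; its degree is the sum of the multiset.
A polynomial is its coefficient function on monomials.\<close>

definition Mon :: "nat \<Rightarrow> nat multiset set" where
  "Mon n = {m. 0 \<notin># m \<and> sum_mset m = n}"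

definition A_hom :: "nat \<Rightarrow> (nat multiset \<Rightarrow> rat) set" where
  "A_hom n = {f. \<forall>m. f m \<noteq> 0 \<longrightarrow> m \<in> Mon n}"

text \<open>Coefficient of the monomial m' in d(monomial m), where d is the derivation with
d x_i = x_{i-1} (i >= 2), d x_1 = 0 (Leibniz rule on the monomial).\<close>
definition dcoef :: "nat multiset \<Rightarrow> nat multiset \<Rightarrow> rat" where
  "dcoef m m' = (\<Sum>i\<in>{i \<in> set_mset m. 2 \<le> i \<and> m' = add_mset (i - 1) (m - {#i#})}.
                   of_nat (count m i))"

definition der :: "nat \<Rightarrow> (nat multiset \<Rightarrow> rat) \<Rightarrow> (nat multiset \<Rightarrow> rat)" where
  "der n f = (\<lambda>m'. \<Sum>m\<in>Mon n. f m * dcoef m m')"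

definition J_hom :: "nat \<Rightarrow> (nat multiset \<Rightarrow> rat) set" where
  "J_hom n = {f \<in> A_hom n. der n f = (\<lambda>_. 0)}"

definition qdim :: "(nat multiset \<Rightarrow> rat) set \<Rightarrow> nat" where
  "qdim S = vector_space.dim (\<lambda>(a::rat) f x. a * f x) S"

definition J_series :: "rat fps" where
  "J_series = Abs_fps (\<lambda>n. of_nat (qdim (J_hom n)))"

end

theory Submission
  imports Defs
begin

text \<open>
  For n >= 2 the derivation maps A_n onto A_(n-1): if x_a is the largest variable of a monomial m
  of degree n - 1, then d(x_(a+1) m / x_a) = m + r, where every monomial of r contains x_(a+1); so
  every monomial of degree n - 1 lies in the image, by downward induction on its largest variable.
  Rank-nullity gives dim J_n = dim A_n - dim A_(n-1) for n >= 2, whereas J_0 = A_0 and J_1 = A_1.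
  Hence J(t) - t = (1 - t) A(t), and A(t) = prod_(k>=1) 1/(1 - t^k) because the monomials of
  degree n are the partitions of n.
\<close>

section \<open>Rank-nullity for finitely spanned subspaces\<close>

context vector_space_pair
begin

lemma dim_image_plus_dim_kernel_le:
  assumes T: "Vector_Spaces.linear s1 s2 T" and F: "finite F" "D \<subseteq> vs1.span F"
  shows "vs2.dim (T ` D) + vs1.dim {x \<in> D. T x = 0} \<le> vs1.dim D"
proof -
  let ?K = "{x \<in> D. T x = 0}"
  obtain B where B: "B \<subseteq> ?K" "vs1.independent B" "?K \<subseteq> vs1.span B" "card B = vs1.dim ?K"
    using vs1.basis_exists by blast
  obtain C where C: "B \<subseteq> C" "C \<subseteq> D" "vs1.independent C" "D \<subseteq> vs1.span C"
    using vs1.maximal_independent_subset_extend[of B D] B by auto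
  have "finite C"
    using vs1.independent_span_bound[OF F(1) C(3)] C F by blast
  have "T ` C \<subseteq> insert 0 (T ` (C - B))"
    using B(1) by auto
  then have "vs2.span (T ` C) \<subseteq> vs2.span (T ` (C - B))"
    by (metis vs2.span_insert_0 vs2.span_mono)
  moreover have "T ` D \<subseteq> vs2.span (T ` C)"
    using C(4) linear_span_image[OF T, of C] by auto
  ultimately have "vs2.dim (T ` D) \<le> card (T ` (C - B))"
    using \<open>finite C\<close> by (intro vs2.dim_le_card) auto
  also have "\<dots> \<le> card C - card B"
    using card_image_le[of "C - B" T] card_Diff_subset[OF finite_subset[OF C(1) \<open>finite C\<close>] C(1)]
      \<open>finite C\<close> by simp
  finally show ?thesis
    using B(4) C vs1.basis_card_eq_dim[of C D] card_mono[OF \<open>finite C\<close> C(1)] by linarith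
qed

lemma dim_le_dim_kernel_plus_dim_image:
  assumes T: "Vector_Spaces.linear s1 s2 T" and D: "vs1.subspace D" and F: "finite F" "D \<subseteq> vs1.span F"
  shows "vs1.dim D \<le> vs1.dim {x \<in> D. T x = 0} + vs2.dim (T ` D)"
proof -
  let ?K = "{x \<in> D. T x = 0}"
  obtain B where B: "B \<subseteq> ?K" "vs1.independent B" "?K \<subseteq> vs1.span B" "card B = vs1.dim ?K"
    using vs1.basis_exists by blast
  obtain E where E: "E \<subseteq> T ` D" "vs2.independent E" "T ` D \<subseteq> vs2.span E" "card E = vs2.dim (T ` D)"
    using vs2.basis_exists by blast
  have "finite B"
    using vs1.independent_span_bound[OF F(1) B(2)] B(1) F(2) by blast
  have "T ` D \<subseteq> vs2.span (T ` F)"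
    using F(2) linear_span_image[OF T, of F] by auto
  then have "finite E"
    using vs2.independent_span_bound[OF _ E(2), of "T ` F"] E(1) F(1) by blast
  have "\<forall>e\<in>E. \<exists>x\<in>D. T x = e"
    using E(1) by blast
  then obtain p where p: "\<And>e. e \<in> E \<Longrightarrow> p e \<in> D \<and> T (p e) = e"
    by metis
  have "D \<subseteq> vs1.span (B \<union> p ` E)"
  proof
    fix x assume "x \<in> D"
    have "T ` p ` E = E"
      unfolding image_image using p by (simp cong: image_cong)
    then have "T x \<in> T ` vs1.span (p ` E)"
      using E(3) \<open>x \<in> D\<close> linear_span_image[OF T, of "p ` E"] by auto
    then obtain y where y: "y \<in> vs1.span (p ` E)" "T y = T x"
      by auto
    have "vs1.span (p ` E) \<subseteq> D"
      using p by (intro vs1.span_minimal D) auto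
    then have "x - y \<in> ?K"
      using vs1.subspace_diff[OF D \<open>x \<in> D\<close>] y linear_diff[OF T] by auto
    then have "x - y \<in> vs1.span (B \<union> p ` E)" and "y \<in> vs1.span (B \<union> p ` E)"
      using B(3) y(1) vs1.span_mono[of B "B \<union> p ` E"] vs1.span_mono[of "p ` E" "B \<union> p ` E"]
      by auto
    from vs1.span_add[OF this] show "x \<in> vs1.span (B \<union> p ` E)"
      by simp
  qed
  then have "vs1.dim D \<le> card (B \<union> p ` E)"
    using vs1.dim_le_card \<open>finite B\<close> \<open>finite E\<close> by blast
  also have "\<dots> \<le> card B + card E"
    using card_Un_le[of B "p ` E"] card_image_le[OF \<open>finite E\<close>, of p] by linarith
  finally show ?thesis
    using B(4) E(4) by simp
qed

lemma dim_kernel_plus_dim_image: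
  assumes "Vector_Spaces.linear s1 s2 T" "vs1.subspace D" "finite F" "D \<subseteq> vs1.span F"
  shows "vs1.dim {x \<in> D. T x = 0} + vs2.dim (T ` D) = vs1.dim D"
  using dim_image_plus_dim_kernel_le[of T F D] dim_le_dim_kernel_plus_dim_image[of T D F] assms
  by linarith

end

section \<open>Finitely supported functions\<close>

interpretation fun_vs: vector_space "\<lambda>(a::'a::field) (f::'b \<Rightarrow> 'a) x. a * f x"
  by unfold_locales (auto simp: fun_eq_iff algebra_simps)

interpretation fun_vs_pair: vector_space_pair
  "\<lambda>(a::'a::field) (f::'b \<Rightarrow> 'a) x. a * f x" "\<lambda>(a::'a::field) (f::'c \<Rightarrow> 'a) x. a * f x"
  by unfold_locales

lemma sum_fun_apply: "(sum f A) x = (\<Sum>a\<in>A. f a x)"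
  by (induct A rule: infinite_finite_induct) auto

definition delta :: "'b \<Rightarrow> 'b \<Rightarrow> 'a::zero_neq_one" where
  "delta m = (\<lambda>x. if x = m then 1 else 0)"

definition supported_on :: "'b set \<Rightarrow> ('b \<Rightarrow> 'a::zero) set" where
  "supported_on M = {f. \<forall>x. f x \<noteq> 0 \<longrightarrow> x \<in> M}"

lemma delta_in_supported_on: "m \<in> M \<Longrightarrow> delta m \<in> supported_on M"
  by (simp add: delta_def supported_on_def)

lemma subspace_supported_on: "fun_vs.subspace (supported_on M)"
  unfolding fun_vs.subspace_def supported_on_def by (auto; metis add_0)

lemma supported_on_expansion:
  fixes f :: "'b \<Rightarrow> 'a::field"
  assumes "finite M" "f \<in> supported_on M"
  shows "f = (\<Sum>m\<in>M. (\<lambda>x. f m * delta m x))"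
proof
  fix x
  have "(\<Sum>m\<in>M. (\<lambda>x. f m * delta m x)) x = (\<Sum>m\<in>M. if x = m then f x else 0)"
    unfolding sum_fun_apply by (rule sum.cong) (auto simp: delta_def)
  then show "f x = (\<Sum>m\<in>M. (\<lambda>x. f m * delta m x)) x"
    using assms by (auto simp: supported_on_def)
qed

lemma span_delta:
  assumes "finite M"
  shows "fun_vs.span (delta ` M :: ('b \<Rightarrow> 'a::field) set) = supported_on M"
proof
  show "fun_vs.span (delta ` M) \<subseteq> supported_on M"
    by (intro fun_vs.span_minimal subspace_supported_on) (auto simp: delta_in_supported_on)
  show "supported_on M \<subseteq> fun_vs.span (delta ` M :: ('b \<Rightarrow> 'a) set)"
  proof
    fix f :: "'b \<Rightarrow> 'a" assume "f \<in> supported_on M"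
    then have "f = (\<Sum>m\<in>M. (\<lambda>x. f m * delta m x))"
      by (rule supported_on_expansion[OF assms])
    also have "\<dots> \<in> fun_vs.span (delta ` M)"
      by (intro fun_vs.span_sum fun_vs.span_scale fun_vs.span_base) auto
    finally show "f \<in> fun_vs.span (delta ` M)" .
  qed
qed

lemma independent_delta: "fun_vs.independent (delta ` M :: ('b \<Rightarrow> 'a::field) set)"
proof
  assume "fun_vs.dependent (delta ` M :: ('b \<Rightarrow> 'a) set)"
  then obtain m where m: "m \<in> M" "delta m \<in> fun_vs.span (delta ` M - {delta m :: 'b \<Rightarrow> 'a})"
    unfolding fun_vs.dependent_def by auto
  have "fun_vs.span (delta ` M - {delta m}) \<subseteq> {f :: 'b \<Rightarrow> 'a. f m = 0}"
    by (rule fun_vs.span_minimal) (auto simp: delta_def fun_vs.subspace_def)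
  with m show False
    by (auto simp: delta_def)
qed

lemma inj_delta: "inj (delta :: 'b \<Rightarrow> 'b \<Rightarrow> 'a::zero_neq_one)"
  by (rule injI) (metis delta_def zero_neq_one)

lemma dim_supported_on:
  assumes "finite M"
  shows "fun_vs.dim (supported_on M :: ('b \<Rightarrow> 'a::field) set) = card M"
proof (rule fun_vs.dim_unique)
  show "delta ` M \<subseteq> (supported_on M :: ('b \<Rightarrow> 'a) set)"
    by (auto simp: delta_in_supported_on)
  show "supported_on M \<subseteq> fun_vs.span (delta ` M :: ('b \<Rightarrow> 'a) set)"
    by (simp add: span_delta[OF assms])
  show "card (delta ` M :: ('b \<Rightarrow> 'a) set) = card M"
    by (simp add: card_image inj_on_subset[OF inj_delta])
qed (rule independent_delta)

section \<open>Monomials and the derivation\<close>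

lemma member_le_sum_mset: "x \<in># m \<Longrightarrow> x \<le> sum_mset (m :: nat multiset)"
  by (simp add: sum_mset.remove)

lemma size_le_sum_mset: "0 \<notin># m \<Longrightarrow> size m \<le> sum_mset (m :: nat multiset)"
proof (induction m)
  case (add x m)
  then show ?case by (simp add: Suc_le_eq)
qed simp

lemma finite_Mon: "finite (Mon n)"
proof (rule finite_subset)
  show "Mon n \<subseteq> (\<Union>k\<le>n. multisets_of_size {1..n} k)"
  proof
    fix m assume "m \<in> Mon n"
    then have "0 \<notin># m" "sum_mset m = n"
      by (auto simp: Mon_def)
    then have "set_mset m \<subseteq> {1..n}" "size m \<le> n"
      using member_le_sum_mset[of _ m] size_le_sum_mset[of m] by (auto simp: Suc_le_eq intro: gr0I)
    then show "m \<in> (\<Union>k\<le>n. multisets_of_size {1..n} k)"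
      by (auto simp: multisets_of_size_def)
  qed
qed auto

lemma Mon_0: "Mon 0 = {{#}}"
proof -
  have "size m = 0" if "m \<in> Mon 0" for m
  proof -
    from that have "0 \<notin># m" "sum_mset m = 0"
      unfolding Mon_def by blast+
    then show ?thesis
      using size_le_sum_mset[of m] by linarith
  qed
  then show ?thesis
    by (auto simp: Mon_def)
qed

lemma A_hom_eq_supported_on: "A_hom n = supported_on (Mon n)"
  by (simp add: A_hom_def supported_on_def)

lemma subspace_A_hom: "fun_vs.subspace (A_hom n)"
  by (simp add: A_hom_eq_supported_on subspace_supported_on)

lemma span_delta_Mon: "fun_vs.span (delta ` Mon n) = A_hom n"
  by (simp add: A_hom_eq_supported_on span_delta finite_Mon)

lemma dim_A_hom: "fun_vs.dim (A_hom n) = card (Mon n)"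
  by (simp add: A_hom_eq_supported_on dim_supported_on finite_Mon)

lemma linear_der:
  "Vector_Spaces.linear (\<lambda>a f x. a * f x) (\<lambda>a f x. a * f x) (der n)"
  unfolding Vector_Spaces.linear_iff
  by (auto simp: fun_vs.vector_space_axioms der_def fun_eq_iff sum.distrib algebra_simps
      sum_distrib_left)

lemma dcoef_neq_0E:
  assumes "dcoef m m' \<noteq> 0"
  obtains i where "i \<in># m" "2 \<le> i" "m' = add_mset (i - 1) (m - {#i#})"
proof -
  obtain i where "i \<in> {i \<in> set_mset m. 2 \<le> i \<and> m' = add_mset (i - 1) (m - {#i#})}"
    using assms unfolding dcoef_def by (meson sum.not_neutral_contains_not_neutral)
  then show thesis
    using that by blast
qed

lemma lower_variable_in_Mon:
  "m \<in> Mon n \<Longrightarrow> i \<in># m \<Longrightarrow> 2 \<le> i \<Longrightarrow> add_mset (i - 1) (m - {#i#}) \<in> Mon (n - 1)"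
  unfolding Mon_def using sum_mset.remove[of i m] by (auto dest: in_diffD)

lemma der_in_A_hom: "der n f \<in> A_hom (n - 1)"
  unfolding A_hom_def
proof (intro CollectI allI impI)
  fix m' assume "der n f m' \<noteq> 0"
  then obtain m where "m \<in> Mon n" "dcoef m m' \<noteq> 0"
    unfolding der_def by (metis (no_types, lifting) mult_eq_0_iff sum.neutral)
  then show "m' \<in> Mon (n - 1)"
    by (metis dcoef_neq_0E lower_variable_in_Mon)
qed

lemma der_delta:
  assumes "m \<in> Mon n"
  shows "der n (delta m) = dcoef m"
proof
  fix m'
  have "der n (delta m) m' = (\<Sum>k\<in>Mon n. if k = m then dcoef m m' else 0)"
    unfolding der_def by (rule sum.cong) (auto simp: delta_def)
  then show "der n (delta m) m' = dcoef m m'"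
    using assms finite_Mon by simp
qed

lemma der_eq_0: "n \<le> 1 \<Longrightarrow> der n f = 0"
proof
  fix m' assume "n \<le> 1"
  have "dcoef m m' = 0" if "m \<in> Mon n" for m
  proof (rule ccontr)
    assume "dcoef m m' \<noteq> 0"
    then obtain i where "i \<in># m" "2 \<le> i"
      by (rule dcoef_neq_0E)
    then show False
      using member_le_sum_mset[of i m] \<open>m \<in> Mon n\<close> \<open>n \<le> 1\<close> by (simp add: Mon_def)
  qed
  then show "der n f m' = 0 m'"
    unfolding der_def by simp
qed

lemma dcoef_raise_Max:
  fixes m :: "nat multiset"
  assumes "m \<noteq> {#}" "0 \<notin># m"
  defines "a \<equiv> Max (set_mset m)"
  defines "L \<equiv> add_mset (Suc a) (m - {#a#})"
  shows "dcoef L m = 1"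
    and "dcoef L m' \<noteq> 0 \<Longrightarrow> m' \<noteq> m \<Longrightarrow> Suc a \<in># m'"
proof -
  have "a \<in># m"
    using assms(1) by (simp add: a_def)
  then have "1 \<le> a"
    using assms(2) by (cases a) auto
  have "Suc a \<notin># m"
    unfolding a_def by (metis Max_ge finite_set_mset Suc_n_not_le_n)
  then have count_L: "count L (Suc a) = 1"
    by (simp add: L_def not_in_iff)
  have other_raised: "Suc a \<in># add_mset (i - 1) (L - {#i#})" if "i \<noteq> Suc a" for i
    using count_L that by (simp add: in_diff_count)
  have "i = Suc a" if "m = add_mset (i - 1) (L - {#i#})" for i
    using other_raised[of i] that \<open>Suc a \<notin># m\<close> by auto
  moreover have "Suc a \<in># L" "2 \<le> Suc a" "m = add_mset (Suc a - 1) (L - {#Suc a#})"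
    using \<open>a \<in># m\<close> \<open>1 \<le> a\<close> by (simp_all add: L_def)
  ultimately have "{i \<in> set_mset L. 2 \<le> i \<and> m = add_mset (i - 1) (L - {#i#})} = {Suc a}"
    by blast
  then show "dcoef L m = 1"
    by (simp add: dcoef_def count_L)
  assume "dcoef L m' \<noteq> 0" "m' \<noteq> m"
  obtain i where "i \<in># L" "2 \<le> i" and m': "m' = add_mset (i - 1) (L - {#i#})"
    using \<open>dcoef L m' \<noteq> 0\<close> by (rule dcoef_neq_0E)
  have "i \<noteq> Suc a"
    using \<open>m' \<noteq> m\<close> \<open>a \<in># m\<close> m' by (auto simp: L_def)
  then show "Suc a \<in># m'"
    using other_raised m' by simp
qed

lemma subspace_image_der: "fun_vs.subspace (der n ` A_hom n)"
  by (rule fun_vs_pair.linear_subspace_image[OF linear_der subspace_A_hom])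

lemma delta_eq_der_raise_Max:
  assumes "2 \<le> n" "m \<in> Mon (n - 1)"
  defines "a \<equiv> Max (set_mset m)"
  defines "L \<equiv> add_mset (Suc a) (m - {#a#})"
  shows "L \<in> Mon n"
    and "delta m = der n (delta L) - (\<Sum>m'\<in>Mon (n - 1) - {m}. (\<lambda>x. dcoef L m' * delta m' x))"
proof -
  have "m \<noteq> {#}" "0 \<notin># m"
    using assms(1,2) by (auto simp: Mon_def)
  then have "a \<in># m"
    by (simp add: a_def)
  then show "L \<in> Mon n"
    using assms(1,2) \<open>0 \<notin># m\<close> sum_mset.remove[OF \<open>a \<in># m\<close>]
    by (auto simp: Mon_def L_def dest: in_diffD)
  then have "der n (delta L) = (\<Sum>m'\<in>Mon (n - 1). (\<lambda>x. dcoef L m' * delta m' x))"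
    using supported_on_expansion[OF finite_Mon] der_in_A_hom[of n "delta L"]
    by (simp add: der_delta A_hom_eq_supported_on)
  also have "\<dots> = delta m + (\<Sum>m'\<in>Mon (n - 1) - {m}. (\<lambda>x. dcoef L m' * delta m' x))"
    using dcoef_raise_Max(1)[OF \<open>m \<noteq> {#}\<close> \<open>0 \<notin># m\<close>]
    by (subst sum.remove[OF finite_Mon assms(2)]) (simp add: L_def a_def)
  finally show "delta m = der n (delta L) - (\<Sum>m'\<in>Mon (n - 1) - {m}. (\<lambda>x. dcoef L m' * delta m' x))"
    by (simp add: eq_diff_eq)
qed

lemma delta_in_image_der:
  assumes "2 \<le> n" "m \<in> Mon (n - 1)"
  shows "delta m \<in> der n ` A_hom n"
  using assms(2)
proof (induction "n - 1 - Max (set_mset m)" arbitrary: m rule: less_induct)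
  case less
  let ?I = "der n ` A_hom n"
  let ?a = "Max (set_mset m)"
  let ?L = "add_mset (Suc ?a) (m - {#?a#})"
  have "m \<noteq> {#}" "0 \<notin># m"
    using less.prems assms(1) by (auto simp: Mon_def)
  have "delta ?L \<in> A_hom n"
    using delta_eq_der_raise_Max(1)[OF assms(1) less.prems]
    by (simp add: A_hom_eq_supported_on delta_in_supported_on)
  then have "der n (delta ?L) \<in> ?I"
    by (rule imageI)
  moreover have "(\<Sum>m'\<in>Mon (n - 1) - {m}. (\<lambda>x. dcoef ?L m' * delta m' x)) \<in> ?I"
  proof (rule fun_vs.subspace_sum[OF subspace_image_der])
    fix m' assume m': "m' \<in> Mon (n - 1) - {m}"
    show "(\<lambda>x. dcoef ?L m' * delta m' x) \<in> ?I"
    proof (cases "dcoef ?L m' = 0")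
      case True
      then show ?thesis
        using fun_vs.subspace_0[OF subspace_image_der] by (simp add: zero_fun_def)
    next
      case False
      then have "Suc ?a \<in># m'"
        using dcoef_raise_Max(2)[OF \<open>m \<noteq> {#}\<close> \<open>0 \<notin># m\<close>] m' by blast
      then have "?a < Max (set_mset m')"
        using Max_ge[OF finite_set_mset] by (simp add: Suc_le_eq[symmetric])
      moreover have "Max (set_mset m') \<in># m'"
        using \<open>Suc ?a \<in># m'\<close> by (intro Max_in) auto
      then have "Max (set_mset m') \<le> n - 1"
        using m' member_le_sum_mset[of "Max (set_mset m')" m'] by (simp add: Mon_def)
      ultimately have "delta m' \<in> ?I"
        using less.hyps m' by simp
      then show ?thesis
        by (rule fun_vs.subspace_scale[OF subspace_image_der])
    qed
  qed
  ultimately show ?case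
    unfolding delta_eq_der_raise_Max(2)[OF assms(1) less.prems]
    by (rule fun_vs.subspace_diff[OF subspace_image_der])
qed

lemma image_der:
  assumes "2 \<le> n"
  shows "der n ` A_hom n = A_hom (n - 1)"
proof
  show "der n ` A_hom n \<subseteq> A_hom (n - 1)"
    using der_in_A_hom by blast
  have "delta ` Mon (n - 1) \<subseteq> der n ` A_hom n"
    using delta_in_image_der[OF assms] by blast
  from fun_vs.span_minimal[OF this subspace_image_der]
  show "A_hom (n - 1) \<subseteq> der n ` A_hom n"
    by (simp only: span_delta_Mon)
qed

lemma qdim_J_hom_plus_card_Mon:
  assumes "2 \<le> n"
  shows "qdim (J_hom n) + card (Mon (n - 1)) = card (Mon n)"
proof -
  have "A_hom n \<subseteq> fun_vs.span (delta ` Mon n)"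
    by (simp add: span_delta_Mon)
  from fun_vs_pair.dim_kernel_plus_dim_image[OF linear_der[of n] subspace_A_hom _ this]
  show ?thesis
    by (simp add: finite_Mon qdim_def J_hom_def zero_fun_def image_der[OF assms] dim_A_hom)
qed

lemma qdim_J_hom_le_1: "n \<le> 1 \<Longrightarrow> qdim (J_hom n) = card (Mon n)"
  by (simp add: qdim_def J_hom_def der_eq_0 zero_fun_def dim_A_hom)

section \<open>Poincare series\<close>

definition A_series :: "rat fps" where
  "A_series = Abs_fps (\<lambda>n. of_nat (card (Mon n)))"

lemma J_series_minus_X: "J_series - fps_X = (1 - fps_X) * A_series"
proof (rule fps_ext)
  fix n
  have rhs: "fps_nth ((1 - fps_X) * A_series) n
      = of_nat (card (Mon n)) - (if n = 0 then 0 else of_nat (card (Mon (n - 1))))"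
    by (simp add: algebra_simps A_series_def)
  show "fps_nth (J_series - fps_X) n = fps_nth ((1 - fps_X) * A_series) n"
  proof (cases "n \<le> 1")
    case True
    then show ?thesis
      unfolding rhs using qdim_J_hom_le_1[OF True]
      by (cases n) (auto simp: J_series_def Mon_0 fps_X_nth)
  next
    case False
    then have "of_nat (qdim (J_hom n))
        = (of_nat (card (Mon n)) - of_nat (card (Mon (n - 1))) :: rat)"
      using qdim_J_hom_plus_card_Mon[of n] by (simp add: eq_diff_eq flip: of_nat_add)
    then show ?thesis
      unfolding rhs using False by (simp add: J_series_def fps_X_nth)
  qed
qed

definition Mon_upto :: "nat \<Rightarrow> nat \<Rightarrow> nat multiset set" where
  "Mon_upto k n = {m \<in> Mon n. \<forall>i\<in>#m. i \<le> k}"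

lemma finite_Mon_upto: "finite (Mon_upto k n)"
  by (rule finite_subset[OF _ finite_Mon]) (auto simp: Mon_upto_def)

lemma Mon_upto_0: "Mon_upto 0 n = (if n = 0 then {{#}} else {})"
proof -
  have "Mon_upto 0 n \<subseteq> {{#}}"
  proof
    fix m assume m: "m \<in> Mon_upto 0 n"
    have "x \<notin># m" for x
      using m by (cases x) (auto simp: Mon_upto_def Mon_def)
    then show "m \<in> {{#}}"
      by (auto intro: multiset_eqI simp: not_in_iff)
  qed
  moreover have "{#} \<in> Mon_upto 0 n \<longleftrightarrow> n = 0"
    by (simp add: Mon_upto_def Mon_def)
  ultimately show ?thesis
    by (auto simp: subset_singleton_iff)
qed

lemma Mon_upto_eq_Mon: "n \<le> k \<Longrightarrow> Mon_upto k n = Mon n"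
  unfolding Mon_upto_def Mon_def using member_le_sum_mset by fastforce

lemma Mon_upto_Suc:
  "Mon_upto (Suc k) n =
     Mon_upto k n \<union> (if Suc k \<le> n then add_mset (Suc k) ` Mon_upto (Suc k) (n - Suc k) else {})"
proof (intro equalityI subsetI)
  fix m assume m: "m \<in> Mon_upto (Suc k) n"
  show "m \<in> Mon_upto k n \<union>
    (if Suc k \<le> n then add_mset (Suc k) ` Mon_upto (Suc k) (n - Suc k) else {})"
  proof (cases "Suc k \<in># m")
    case True
    then have "m = add_mset (Suc k) (m - {#Suc k#})" "Suc k \<le> n"
      using m member_le_sum_mset by (auto simp: Mon_upto_def Mon_def)
    moreover have "m - {#Suc k#} \<in> Mon_upto (Suc k) (n - Suc k)"
      using m True sum_mset.remove[OF True] by (auto simp: Mon_upto_def Mon_def dest: in_diffD)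
    ultimately show ?thesis by (metis UnI2 image_eqI)
  next
    case False
    then show ?thesis
      using m by (auto simp: Mon_upto_def le_Suc_eq)
  qed
next
  fix m
  assume "m \<in> Mon_upto k n \<union>
    (if Suc k \<le> n then add_mset (Suc k) ` Mon_upto (Suc k) (n - Suc k) else {})"
  then show "m \<in> Mon_upto (Suc k) n"
    by (auto simp: Mon_upto_def Mon_def split: if_splits)
qed

lemma card_Mon_upto_Suc:
  "card (Mon_upto (Suc k) n) =
     card (Mon_upto k n) + (if Suc k \<le> n then card (Mon_upto (Suc k) (n - Suc k)) else 0)"
proof -
  have "Mon_upto k n \<inter> add_mset (Suc k) ` Mon_upto (Suc k) (n - Suc k) = {}"
    by (auto simp: Mon_upto_def)
  moreover have "card (add_mset (Suc k) ` Mon_upto (Suc k) (n - Suc k))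
      = card (Mon_upto (Suc k) (n - Suc k))"
    by (rule card_image) (simp add: inj_on_def)
  ultimately show ?thesis
    by (subst Mon_upto_Suc[of k n]) (simp add: card_Un_disjoint finite_Mon_upto)
qed

definition A_upto_series :: "nat \<Rightarrow> rat fps" where
  "A_upto_series k = Abs_fps (\<lambda>n. of_nat (card (Mon_upto k n)))"

lemma A_upto_series_0: "A_upto_series 0 = 1"
  by (rule fps_ext) (simp add: A_upto_series_def Mon_upto_0)

lemma A_upto_series_Suc: "A_upto_series (Suc k) * (1 - fps_X ^ Suc k) = A_upto_series k"
proof (rule fps_ext)
  fix n
  have "fps_nth (A_upto_series (Suc k) * (1 - fps_X ^ Suc k)) n
      = fps_nth (A_upto_series (Suc k)) n - fps_nth (A_upto_series (Suc k) * fps_X ^ Suc k) n"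
    by (simp add: right_diff_distrib)
  also have "\<dots> = fps_nth (A_upto_series k) n"
    unfolding fps_X_power_mult_right_nth
    by (simp add: A_upto_series_def card_Mon_upto_Suc[of k n])
  finally show "fps_nth (A_upto_series (Suc k) * (1 - fps_X ^ Suc k)) n
      = fps_nth (A_upto_series k) n" .
qed

lemma A_upto_series_mult_prod: "A_upto_series N * (\<Prod>k\<in>{1..N}. 1 - fps_X ^ k) = 1"
proof (induction N)
  case 0
  then show ?case by (simp add: A_upto_series_0)
next
  case (Suc N)
  have "A_upto_series (Suc N) * (\<Prod>k\<in>{1..Suc N}. 1 - fps_X ^ k)
      = (A_upto_series (Suc N) * (1 - fps_X ^ Suc N)) * (\<Prod>k\<in>{1..N}. 1 - fps_X ^ k)"
    by (simp add: algebra_simps)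
  then show ?case
    by (simp only: A_upto_series_Suc Suc.IH)
qed

lemma fps_mult_nth_cong:
  assumes "\<And>i. i \<le> n \<Longrightarrow> fps_nth f i = fps_nth g i"
  shows "fps_nth (f * h) n = fps_nth (g * h) n"
  unfolding fps_mult_nth using assms by (intro sum.cong) auto

lemma A_series_mult_prod_nth:
  assumes "n \<le> N"
  shows "fps_nth (A_series * (\<Prod>k\<in>{1..N}. 1 - fps_X ^ k)) n = (if n = 0 then 1 else 0)"
proof -
  have "fps_nth (A_series * (\<Prod>k\<in>{1..N}. 1 - fps_X ^ k)) n
      = fps_nth (A_upto_series N * (\<Prod>k\<in>{1..N}. 1 - fps_X ^ k)) n"
    using assms by (intro fps_mult_nth_cong)
      (simp add: A_series_def A_upto_series_def Mon_upto_eq_Mon)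
  also have "\<dots> = (if n = 0 then 1 else 0)"
    by (simp only: A_upto_series_mult_prod fps_one_nth)
  finally show ?thesis .
qed

theorem mainTheorem10:
  shows "\<forall>N. \<forall>n\<le>N.
    fps_nth ((J_series - fps_X) * (\<Prod>k\<in>{2..N}. 1 - fps_X ^ k)) n = (if n = 0 then 1 else 0)"
proof (intro allI impI)
  fix N n :: nat
  assume "n \<le> N"
  show "fps_nth ((J_series - fps_X) * (\<Prod>k\<in>{2..N}. 1 - fps_X ^ k)) n = (if n = 0 then 1 else 0)"
  proof (cases "N = 0")
    case True
    with \<open>n \<le> N\<close> show ?thesis
      by (simp add: J_series_minus_X A_series_def Mon_0)
  next
    case False
    then have "(\<Prod>k\<in>{1..N}. 1 - fps_X ^ k)
        = (1 - fps_X) * (\<Prod>k\<in>{2..N}. 1 - (fps_X :: rat fps) ^ k)"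
      by (subst prod.atLeast_Suc_atMost) (auto simp: numeral_2_eq_2)
    then have "(J_series - fps_X) * (\<Prod>k\<in>{2..N}. 1 - fps_X ^ k)
        = A_series * (\<Prod>k\<in>{1..N}. 1 - fps_X ^ k)"
      by (simp add: J_series_minus_X ac_simps)
    with A_series_mult_prod_nth[OF \<open>n \<le> N\<close>] show ?thesis
      by simp
  qed
qed

end
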